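(* Let $\bm x \in \Delta_n \setminus \{\bm e_1,\dots,\bm e_n,\tfrac1n\bm e\}$ and $p \geqslant 2$. Let $S_p = \sum_{i=1}^n x_i^p$ and $w_i = x_i^p/S_p$ for $i=1,\dots,n$, and $\bm w = (w_1,\dots,w_n)$. Then the Shannon entropy $H(\bm w) = -\sum_{i=1}^n w_i \ln w_i$ satisfies $$0 \leqslant H(\bm w) \leqslant -\frac{p}{p-1}\ln \|\bm x\|_p.$$
   Context: $\|\bm x\|_p = (\sum_{i=1}^n x_i^p)^{1/p}$; $\Delta_n = \{\bm x \in \mathbb{R}^n_{\geqslant 0} : \sum_{i=1}^n x_i = 1\}$; $\bm e_i$ is the $i$-th standard unit vector and $\bm e$ the all-ones vector in $\mathbb{R}^n$. The convention $0\ln 0 = 0$ is used. *)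

theory Defs
  imports "HOL-Analysis.Analysis"
begin

definition prob_simplex :: "(real ^ 'n::finite) set" where
  "prob_simplex = {x. (\<forall>i. 0 \<le> x $ i) \<and> (\<Sum>i\<in>UNIV. x $ i) = 1}"

definition pnorm :: "real \<Rightarrow> real ^ 'n::finite \<Rightarrow> real" where
  "pnorm p x = (\<Sum>i\<in>UNIV. \<bar>x $ i\<bar> powr p) powr (1 / p)"

definition shannon_entropy :: "real ^ 'n::finite \<Rightarrow> real" where
  "shannon_entropy w = - (\<Sum>i\<in>UNIV. (if w $ i = 0 then 0 else w $ i * ln (w $ i)))"

end

theory Submission
  imports Defs
begin

text \<open>
  With \<open>S = \<Sum>i. x\<^sub>i\<^sup>p\<close> one has \<open>ln w\<^sub>i = p ln x\<^sub>i - ln S\<close>, so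
  \<open>\<Sum>i. w\<^sub>i ln x\<^sub>i = (\<Sum>i. w\<^sub>i ln w\<^sub>i + ln S) / p\<close>. Gibbs' inequality
  \<open>\<Sum>i. w\<^sub>i ln x\<^sub>i \<le> \<Sum>i. w\<^sub>i ln w\<^sub>i\<close> then gives \<open>(p - 1) \<Sum>i. w\<^sub>i ln w\<^sub>i \<ge> ln S\<close>,
  i.e. \<open>H(w) \<le> - ln S / (p - 1) = - p / (p - 1) ln \<parallel>x\<parallel>\<^sub>p\<close>.
\<close>

lemma shannon_entropy_eq: "shannon_entropy w = - (\<Sum>i\<in>UNIV. w $ i * ln (w $ i))"
proof -
  have "(if w $ i = 0 then 0 else w $ i * ln (w $ i)) = w $ i * ln (w $ i)" for i
    by simp
  then show ?thesis
    by (simp add: shannon_entropy_def)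
qed

lemma shannon_entropy_nonneg:
  assumes "w \<in> prob_simplex"
  shows "0 \<le> shannon_entropy w"
proof -
  have nonneg: "0 \<le> w $ i" and sum1: "(\<Sum>i\<in>UNIV. w $ i) = 1" for i
    using assms by (auto simp: prob_simplex_def)
  have "w $ i \<le> 1" for i
    using member_le_sum[of i UNIV "\<lambda>i. w $ i"] nonneg sum1 by simp
  then have "w $ i * ln (w $ i) \<le> 0" for i
    using nonneg[of i] by (cases "w $ i = 0") (auto intro: mult_nonneg_nonpos)
  then show ?thesis
    unfolding shannon_entropy_eq by (simp add: sum_nonpos)
qed

lemma gibbs_inequality:
  fixes w q :: "'a \<Rightarrow> real"
  assumes w_nonneg: "\<And>i. i \<in> A \<Longrightarrow> 0 \<le> w i"
    and q_nonneg: "\<And>i. i \<in> A \<Longrightarrow> 0 \<le> q i"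
    and q_pos: "\<And>i. i \<in> A \<Longrightarrow> 0 < w i \<Longrightarrow> 0 < q i"
    and sum_le: "sum q A \<le> sum w A"
  shows "(\<Sum>i\<in>A. w i * ln (q i)) \<le> (\<Sum>i\<in>A. w i * ln (w i))"
proof -
  have pointwise: "w i * ln (q i) - w i * ln (w i) \<le> q i - w i" if "i \<in> A" for i
  proof (cases "w i = 0")
    case True
    then show ?thesis using q_nonneg[OF that] by simp
  next
    case False
    then have w: "0 < w i" using w_nonneg[OF that] by simp
    then have q: "0 < q i" using q_pos[OF that] by simp
    have "w i * ln (q i / w i) \<le> w i * (q i / w i - 1)"
      using w q by (intro mult_left_mono ln_le_minus_one) auto
    then show ?thesis
      using w q by (simp add: ln_div right_diff_distrib)
  qed
  have "(\<Sum>i\<in>A. w i * ln (q i) - w i * ln (w i)) \<le> (\<Sum>i\<in>A. q i - w i)"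
    by (rule sum_mono) (rule pointwise)
  also have "\<dots> \<le> 0"
    using sum_le by (simp add: sum_subtractf)
  finally show ?thesis
    by (simp add: sum_subtractf)
qed

lemma ln_pnorm:
  assumes "0 < (\<Sum>i\<in>UNIV. \<bar>x $ i\<bar> powr p)"
  shows "ln (pnorm p x) = ln (\<Sum>i\<in>UNIV. \<bar>x $ i\<bar> powr p) / p"
  using assms by (simp add: pnorm_def ln_powr)

lemma prob_simplex_sum_powr_pos:
  assumes "x \<in> prob_simplex"
  shows "0 < (\<Sum>i\<in>UNIV. x $ i powr p)"
proof -
  have nonneg: "0 \<le> x $ i" for i
    using assms by (simp add: prob_simplex_def)
  obtain j where "x $ j \<noteq> 0"
    using assms by (force simp: prob_simplex_def)
  then have "0 < x $ j powr p"
    by simp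
  also have "\<dots> \<le> (\<Sum>i\<in>UNIV. x $ i powr p)"
    by (rule member_le_sum) auto
  finally show ?thesis .
qed

lemma escort_in_prob_simplex:
  assumes "x \<in> prob_simplex"
  shows "(\<chi> i. x $ i powr p / (\<Sum>j\<in>UNIV. x $ j powr p)) \<in> prob_simplex"
  using prob_simplex_sum_powr_pos[OF assms, of p]
  by (simp add: prob_simplex_def sum_divide_distrib[symmetric])

lemma escort_weight_mult_ln:
  fixes a S p :: real
  assumes "0 \<le> a" and "0 < S"
  shows "a powr p / S * ln (a powr p / S) = p * (a powr p / S * ln a) - a powr p / S * ln S"
proof (cases "a = 0")
  case False
  then have ln_weight: "ln (a powr p / S) = p * ln a - ln S"
    using assms by (simp add: ln_div ln_powr)
  show ?thesis
    unfolding ln_weight by (simp add: algebra_simps)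
qed simp

lemma escort_entropy_le:
  fixes p :: real
  assumes x: "x \<in> prob_simplex" and p: "1 < p"
  defines "S \<equiv> \<Sum>i\<in>UNIV. x $ i powr p"
  defines "w \<equiv> \<chi> i. x $ i powr p / S"
  shows "shannon_entropy w \<le> - ln S / (p - 1)"
proof -
  have x_nonneg: "0 \<le> x $ i" for i
    using x by (simp add: prob_simplex_def)
  have x_sum: "(\<Sum>i\<in>UNIV. x $ i) = 1"
    using x by (simp add: prob_simplex_def)
  have S: "0 < S"
    unfolding S_def by (rule prob_simplex_sum_powr_pos[OF x])
  have w: "w \<in> prob_simplex"
    unfolding w_def S_def by (rule escort_in_prob_simplex[OF x])
  then have w_nonneg: "0 \<le> w $ i" for i
    by (simp add: prob_simplex_def)
  have w_sum: "(\<Sum>i\<in>UNIV. w $ i) = 1"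
    using w by (simp add: prob_simplex_def)
  have x_pos: "0 < x $ i" if "0 < w $ i" for i
    using that x_nonneg[of i] by (cases "x $ i = 0") (auto simp: w_def)
  define E where "E = (\<Sum>i\<in>UNIV. w $ i * ln (w $ i))"
  define G where "G = (\<Sum>i\<in>UNIV. w $ i * ln (x $ i))"
  have "G \<le> E"
    unfolding G_def E_def
    by (rule gibbs_inequality) (use x_nonneg w_nonneg x_pos x_sum w_sum in auto)
  then have "p * G \<le> p * E"
    using p by simp
  have "E = (\<Sum>i\<in>UNIV. p * (w $ i * ln (x $ i)) - w $ i * ln S)"
    unfolding E_def
  proof (rule sum.cong)
    show "w $ i * ln (w $ i) = p * (w $ i * ln (x $ i)) - w $ i * ln S" for i
      unfolding w_def vec_lambda_beta by (rule escort_weight_mult_ln[OF x_nonneg S])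
  qed simp
  also have "\<dots> = p * G - (\<Sum>i\<in>UNIV. w $ i) * ln S"
    unfolding G_def by (simp add: sum_subtractf sum_distrib_left sum_distrib_right)
  finally have "E = p * G - ln S"
    by (simp add: w_sum)
  with \<open>p * G \<le> p * E\<close> have "ln S \<le> (p - 1) * E"
    by (simp add: left_diff_distrib)
  then show ?thesis
    using p unfolding shannon_entropy_eq E_def[symmetric] by (simp add: field_simps)
qed

theorem lemma2:
  fixes x :: "real ^ 'n::finite" and p :: real
  assumes "x \<in> prob_simplex"
    and "\<forall>i. x \<noteq> axis i 1"
    and "x \<noteq> (\<chi> i. 1 / real CARD('n))"
    and "p \<ge> 2"
  defines "S \<equiv> (\<Sum>i\<in>UNIV. x $ i powr p)"
  defines "w \<equiv> (\<chi> i. x $ i powr p / S)"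
  shows "0 \<le> shannon_entropy w \<and> shannon_entropy w \<le> - (p / (p - 1)) * ln (pnorm p x)"
proof -
  \<comment> \<open>The excluded vertices and barycentre only matter for strictness, and \<open>p > 1\<close> suffices.\<close>
  have p: "1 < p"
    using assms(4) by simp
  have "w \<in> prob_simplex"
    unfolding w_def S_def by (rule escort_in_prob_simplex[OF assms(1)])
  then have "0 \<le> shannon_entropy w"
    by (rule shannon_entropy_nonneg)
  moreover have "shannon_entropy w \<le> - ln S / (p - 1)"
    unfolding w_def S_def by (rule escort_entropy_le[OF assms(1) p])
  moreover have "- (p / (p - 1)) * ln (pnorm p x) = - ln S / (p - 1)"
  proof -
    have "\<bar>x $ i\<bar> = x $ i" for i
      using assms(1) by (simp add: prob_simplex_def)
    then have "ln (pnorm p x) = ln S / p"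
      using ln_pnorm[of x p] prob_simplex_sum_powr_pos[OF assms(1), of p] by (simp add: S_def)
    then show ?thesis
      using p by (simp add: field_simps)
  qed
  ultimately show ?thesis
    by linarith
qed

end
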